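(* In the model described in the context, define for $x\in(0,\tfrac12)$ $$\alpha_x^*=\frac{\kappa_x[s^*(x)]}{\kappa_x[s^*(x)]+1},$$ and for $x\in(\tfrac12,1)$ $$\alpha_x^*=\frac{\kappa_x[s^*(x)]+1}{\kappa_x[s^*(x)]},$$ where $\kappa_x(s)=\dfrac{xF_0(s)-(1-x)F_1(s)}{1-2x}$. Then $\alpha_x^*$ is increasing in $x$ on $(0,\tfrac12)$ and decreasing in $x$ on $(\tfrac12,1)$.
   Context: Model. In state $\theta\in\{0,1\}$ a voter's informative signal $s\in\mathbb{R}$ is drawn from a cdf $F_\theta$ with density $f_\theta$ having full support on $\mathbb{R}$, where $f_0(0)=f_1(0)$ and the likelihood ratio $m(s)=f_1(s)/f_0(s)$ is strictly increasing in $s$. For $x\in(0,1)$ let $s^*(x)=m^{-1}\!\left(\frac{x}{1-x}\right)$. (In the paper's model, $\alpha_x^*$ is the sender-optimal mass of trolls targeting voters of type $x$: the probability that such a voter observes a message from a troll farm instead of her informative signal.) *)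

theory Defs
  imports "HOL-Analysis.Analysis"
begin

definition lik_ratio :: "(real \<Rightarrow> real) \<Rightarrow> (real \<Rightarrow> real) \<Rightarrow> real \<Rightarrow> real" where
  "lik_ratio f0 f1 s = f1 s / f0 s"

definition sstar :: "(real \<Rightarrow> real) \<Rightarrow> (real \<Rightarrow> real) \<Rightarrow> real \<Rightarrow> real" where
  "sstar f0 f1 x = (THE s. lik_ratio f0 f1 s = x / (1 - x))"

definition kappa :: "(real \<Rightarrow> real) \<Rightarrow> (real \<Rightarrow> real) \<Rightarrow> real \<Rightarrow> real \<Rightarrow> real" where
  "kappa F0 F1 x s = (x * F0 s - (1 - x) * F1 s) / (1 - 2 * x)"

text \<open>alpha*_x; the value at x = 1/2 (not defined in the paper) is irrelevant.\<close>
definition alpha_star ::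
  "(real \<Rightarrow> real) \<Rightarrow> (real \<Rightarrow> real) \<Rightarrow> (real \<Rightarrow> real) \<Rightarrow> (real \<Rightarrow> real) \<Rightarrow> real \<Rightarrow> real" where
  "alpha_star F0 F1 f0 f1 x =
     (let k = kappa F0 F1 x (sstar f0 f1 x) in
      if x < 1/2 then k / (k + 1) else (k + 1) / k)"

end

theory Submission
  imports Defs
begin

text \<open>Write H_x(s) = x F0(s) - (1 - x) F1(s), so that kappa_x = H_x / (1 - 2x). By the monotone
likelihood ratio, the density x f0 - (1 - x) f1 of H_x is positive left of s*(x) and negative right
of it, so H_x is positive up to s*(x) and attains its maximum there. Hence k(x) = kappa_x(s*(x)) is
the (positive) maximum of kappa_x for x < 1/2 and its (negative) minimum for x > 1/2. The same
single-crossing argument at x = 1/2 gives F1 < F0, so kappa_x(s) is strictly increasing in x on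
either side of 1/2, and together with the extremal property k is strictly increasing on both
intervals. Finally alpha* = k/(k + 1) is increasing in k > 0 and alpha* = 1 + 1/k is decreasing
in k < 0.\<close>

lemma has_integral_pos:
  fixes g :: "'a::euclidean_space \<Rightarrow> real"
  assumes int: "(g has_integral I) S"
    and nonneg: "\<And>t. t \<in> S \<Longrightarrow> 0 \<le> g t"
    and U: "open U" "U \<subseteq> S" "u \<in> U"
    and pos: "\<And>t. t \<in> U \<Longrightarrow> 0 < g t"
  shows "0 < I"
proof (rule ccontr)
  assume "\<not> 0 < I"
  with has_integral_nonneg[OF int nonneg] have "I = 0" by simp
  have abs: "g absolutely_integrable_on S"
    using nonnegative_absolutely_integrable_1 int nonneg by blast
  have "set_lebesgue_integral lebesgue S g = 0"
    using set_lebesgue_integral_eq_integral(2)[OF abs] int \<open>I = 0\<close> by (simp add: integral_unique)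
  then have "AE t in lebesgue. indicator S t *\<^sub>R g t = 0"
    unfolding set_lebesgue_integral_def
    by (subst integral_nonneg_eq_0_iff_AE[symmetric])
      (use abs nonneg in \<open>auto simp: set_integrable_def indicator_def\<close>)
  then have "AE t \<in> U in lebesgue. t \<in> {}"
    by eventually_elim (use U pos in \<open>fastforce simp: indicator_def\<close>)
  from mem_closed_if_AE_lebesgue_open[OF \<open>open U\<close> closed_empty this \<open>u \<in> U\<close>]
  show False by simp
qed

lemma has_integral_Ioc_primitive:
  fixes g :: "real \<Rightarrow> real"
  assumes "\<And>s. (g has_integral H s) {..s}" and "a \<le> b"
  shows "(g has_integral (H b - H a)) {a<..b}"
proof -
  have "(g has_integral (H b - H a)) ({..b} - {..a})"
    by (rule has_integral_setdiff) (use assms in auto)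
  moreover have "{..b} - {..a} = {a<..b}" by auto
  ultimately show ?thesis by simp
qed

lemma has_integral_Ioi_primitive:
  fixes g :: "real \<Rightarrow> real"
  assumes "\<And>s. (g has_integral H s) {..s}" and "(g has_integral T) UNIV"
  shows "(g has_integral (T - H s)) {s<..}"
proof -
  have "(g has_integral (T - H s)) (UNIV - {..s})"
    by (rule has_integral_setdiff) (use assms in auto)
  moreover have "UNIV - {..s} = {s<..}" by auto
  ultimately show ?thesis by simp
qed

locale single_crossing =
  fixes g H :: "real \<Rightarrow> real" and c :: real
  assumes primitive: "\<And>s. (g has_integral H s) {..s}"
    and pos_before: "\<And>t. t < c \<Longrightarrow> 0 < g t"
    and neg_after: "\<And>t. c < t \<Longrightarrow> g t < 0"
    and zero_at: "g c = 0"
begin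

lemma primitive_pos:
  assumes "s \<le> c"
  shows "0 < H s"
proof -
  have "0 \<le> H (s - 1)"
    using has_integral_nonneg[OF primitive] pos_before assms by (simp add: less_imp_le)
  moreover have "0 < H s - H (s - 1)"
  proof (rule has_integral_pos[OF has_integral_Ioc_primitive[OF primitive]])
    show "open {s - 1<..<s}" "{s - 1<..<s} \<subseteq> {s - 1<..s}" "s - 1/2 \<in> {s - 1<..<s}" by auto
  qed (use pos_before zero_at assms in \<open>auto simp: le_less\<close>)
  ultimately show ?thesis by simp
qed

lemma primitive_le_crossing: "H s \<le> H c"
proof (cases "s \<le> c")
  case True
  have "0 \<le> H c - H s"
    by (rule has_integral_nonneg[OF has_integral_Ioc_primitive[OF primitive True]])
      (use pos_before zero_at in \<open>auto simp: le_less\<close>)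
  then show ?thesis by simp
next
  case False
  have "0 \<le> - (H s - H c)"
    by (rule has_integral_nonneg[OF has_integral_neg[OF has_integral_Ioc_primitive[OF primitive]]])
      (use False neg_after in \<open>auto simp: less_imp_le\<close>)
  then show ?thesis by simp
qed

lemma total_less_primitive:
  assumes total: "(g has_integral T) UNIV" and "c < s"
  shows "T < H s"
proof -
  have "0 \<le> - (T - H (s + 1))"
    by (rule has_integral_nonneg[OF has_integral_neg[OF has_integral_Ioi_primitive[OF primitive total]]])
      (use neg_after assms in \<open>auto simp: less_imp_le\<close>)
  moreover have "0 < - (H (s + 1) - H s)"
  proof (rule has_integral_pos[OF has_integral_neg[OF has_integral_Ioc_primitive[OF primitive]]])
    show "open {s<..<s + 1}" "{s<..<s + 1} \<subseteq> {s<..s + 1}" "s + 1/2 \<in> {s<..<s + 1}" by auto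
  qed (use neg_after assms in \<open>auto simp: less_imp_le\<close>)
  ultimately show ?thesis by simp
qed

end

lemma lik_ratio_sstar:
  assumes "strict_mono (lik_ratio f0 f1)" and "lik_ratio f0 f1 s = x / (1 - x)"
  shows "lik_ratio f0 f1 (sstar f0 f1 x) = x / (1 - x)"
proof -
  have "sstar f0 f1 x = s"
    unfolding sstar_def by (rule the_equality) (use assms in \<open>metis strict_mono_eq\<close>)+
  with assms show ?thesis by simp
qed

lemma kappa_less_kappa:
  assumes "F1 s < F0 s" and "x < y" and "0 < (1 - 2 * x) * (1 - 2 * y)"
  shows "kappa F0 F1 x s < kappa F0 F1 y s"
proof -
  have "1 - 2 * x \<noteq> 0" "1 - 2 * y \<noteq> 0" using assms(3) by auto
  then have "kappa F0 F1 y s - kappa F0 F1 x s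
      = (y - x) * (F0 s - F1 s) / ((1 - 2 * x) * (1 - 2 * y))"
    unfolding kappa_def by (simp add: field_simps)
  also have "\<dots> > 0" using assms by simp
  finally show ?thesis by simp
qed

locale mlr_model =
  fixes F0 F1 f0 f1 :: "real \<Rightarrow> real"
  assumes dens0: "\<And>s. (f0 has_integral F0 s) {..s}"
    and dens1: "\<And>s. (f1 has_integral F1 s) {..s}"
    and tot0: "(f0 has_integral 1) UNIV"
    and tot1: "(f1 has_integral 1) UNIV"
    and supp0: "\<And>s. f0 s > 0"
    and mlrp: "strict_mono (lik_ratio f0 f1)"
    and onto: "\<And>y. y > 0 \<Longrightarrow> \<exists>s. lik_ratio f0 f1 s = y"
begin

lemma single_crossing_sstar:
  assumes "0 < x" "x < 1"
  shows "single_crossing (\<lambda>t. x * f0 t - (1 - x) * f1 t) (\<lambda>s. x * F0 s - (1 - x) * F1 s)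
           (sstar f0 f1 x)"
proof
  let ?m = "lik_ratio f0 f1" and ?c = "sstar f0 f1 x"
  have crossing: "?m ?c = x / (1 - x)"
    using onto[of "x / (1 - x)"] assms by (auto intro: lik_ratio_sstar[OF mlrp])
  have "x * f0 t - (1 - x) * f1 t = (1 - x) * f0 t * (x / (1 - x) - ?m t)" for t
    using supp0[of t] assms by (simp add: lik_ratio_def field_simps)
  then have factor: "x * f0 t - (1 - x) * f1 t = (1 - x) * f0 t * (?m ?c - ?m t)" for t
    by (simp only: crossing)
  show "((\<lambda>t. x * f0 t - (1 - x) * f1 t) has_integral x * F0 s - (1 - x) * F1 s) {..s}" for s
    by (intro has_integral_diff has_integral_mult_right dens0 dens1)
  show "0 < x * f0 t - (1 - x) * f1 t" if "t < ?c" for t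
    using factor[of t] supp0[of t] assms strict_monoD[OF mlrp that] by simp
  show "x * f0 t - (1 - x) * f1 t < 0" if "?c < t" for t
    using factor[of t] supp0[of t] assms strict_monoD[OF mlrp that]
    by (simp add: mult_pos_neg)
  show "x * f0 ?c - (1 - x) * f1 ?c = 0"
    using factor[of ?c] by simp
qed

lemma F1_less_F0: "F1 s < F0 s"
proof -
  interpret half: single_crossing "\<lambda>t. 1/2 * f0 t - (1 - 1/2) * f1 t"
      "\<lambda>s. 1/2 * F0 s - (1 - 1/2) * F1 s" "sstar f0 f1 (1/2)"
    by (rule single_crossing_sstar) auto
  have total: "((\<lambda>t. 1/2 * f0 t - (1 - 1/2) * f1 t) has_integral 0) UNIV"
    using has_integral_diff[OF has_integral_mult_right[OF tot0] has_integral_mult_right[OF tot1],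
        of "1/2" "1 - 1/2"]
    by simp
  have "0 < 1/2 * F0 s - (1 - 1/2) * F1 s"
  proof (cases "s \<le> sstar f0 f1 (1/2)")
    case True
    then show ?thesis by (rule half.primitive_pos)
  next
    case False
    then show ?thesis by (intro half.total_less_primitive[OF total]) simp
  qed
  then show ?thesis by simp
qed

definition kappa_star :: "real \<Rightarrow> real" where
  "kappa_star x = kappa F0 F1 x (sstar f0 f1 x)"

lemma kappa_le_kappa_star:
  assumes "0 < x" "x < 1/2"
  shows "kappa F0 F1 x s \<le> kappa_star x"
proof -
  interpret single_crossing "\<lambda>t. x * f0 t - (1 - x) * f1 t" "\<lambda>s. x * F0 s - (1 - x) * F1 s"
      "sstar f0 f1 x"
    by (rule single_crossing_sstar) (use assms in auto)
  show ?thesis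
    unfolding kappa_star_def kappa_def
    by (rule divide_right_mono[OF primitive_le_crossing]) (use assms in simp)
qed

lemma kappa_star_pos:
  assumes "0 < x" "x < 1/2"
  shows "0 < kappa_star x"
proof -
  interpret single_crossing "\<lambda>t. x * f0 t - (1 - x) * f1 t" "\<lambda>s. x * F0 s - (1 - x) * F1 s"
      "sstar f0 f1 x"
    by (rule single_crossing_sstar) (use assms in auto)
  show ?thesis
    unfolding kappa_star_def kappa_def using primitive_pos[OF order_refl] assms by simp
qed

lemma kappa_star_le_kappa:
  assumes "1/2 < x" "x < 1"
  shows "kappa_star x \<le> kappa F0 F1 x s"
proof -
  interpret single_crossing "\<lambda>t. x * f0 t - (1 - x) * f1 t" "\<lambda>s. x * F0 s - (1 - x) * F1 s"
      "sstar f0 f1 x"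
    by (rule single_crossing_sstar) (use assms in auto)
  show ?thesis
    unfolding kappa_star_def kappa_def
    by (rule divide_right_mono_neg[OF primitive_le_crossing]) (use assms in simp)
qed

lemma kappa_star_neg:
  assumes "1/2 < x" "x < 1"
  shows "kappa_star x < 0"
proof -
  interpret single_crossing "\<lambda>t. x * f0 t - (1 - x) * f1 t" "\<lambda>s. x * F0 s - (1 - x) * F1 s"
      "sstar f0 f1 x"
    by (rule single_crossing_sstar) (use assms in auto)
  show ?thesis
    unfolding kappa_star_def kappa_def using primitive_pos[OF order_refl] assms
    by (simp add: divide_pos_neg)
qed

lemma strict_mono_on_kappa_star_low: "strict_mono_on {0<..<1/2} kappa_star"
proof (rule strict_mono_onI)
  fix x y :: real assume "x \<in> {0<..<1/2}" "y \<in> {0<..<1/2}" "x < y"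
  then have "kappa_star x < kappa F0 F1 y (sstar f0 f1 x)"
    unfolding kappa_star_def by (intro kappa_less_kappa F1_less_F0) auto
  also have "\<dots> \<le> kappa_star y"
    using \<open>y \<in> {0<..<1/2}\<close> by (intro kappa_le_kappa_star) auto
  finally show "kappa_star x < kappa_star y" .
qed

lemma strict_mono_on_kappa_star_high: "strict_mono_on {1/2<..<1} kappa_star"
proof (rule strict_mono_onI)
  fix x y :: real assume "x \<in> {1/2<..<1}" "y \<in> {1/2<..<1}" "x < y"
  then have "kappa_star x \<le> kappa F0 F1 x (sstar f0 f1 y)"
    by (intro kappa_star_le_kappa) auto
  also have "\<dots> < kappa_star y"
    unfolding kappa_star_def using \<open>x \<in> {1/2<..<1}\<close> \<open>y \<in> {1/2<..<1}\<close> \<open>x < y\<close>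
    by (intro kappa_less_kappa F1_less_F0) (auto intro: mult_neg_neg)
  finally show "kappa_star x < kappa_star y" .
qed

lemma strict_mono_on_alpha_star: "strict_mono_on {0<..<1/2} (alpha_star F0 F1 f0 f1)"
proof (rule strict_mono_onI)
  fix x y :: real assume xy: "x \<in> {0<..<1/2}" "y \<in> {0<..<1/2}" "x < y"
  have "0 < kappa_star x" "kappa_star x < kappa_star y"
    using kappa_star_pos strict_mono_onD[OF strict_mono_on_kappa_star_low] xy by auto
  then have "kappa_star x / (kappa_star x + 1) < kappa_star y / (kappa_star y + 1)"
    by (simp add: field_simps)
  then show "alpha_star F0 F1 f0 f1 x < alpha_star F0 F1 f0 f1 y"
    using xy by (simp add: alpha_star_def kappa_star_def Let_def)
qed

lemma strict_antimono_on_alpha_star: "strict_antimono_on {1/2<..<1} (alpha_star F0 F1 f0 f1)"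
proof (rule monotone_onI)
  fix x y :: real assume xy: "x \<in> {1/2<..<1}" "y \<in> {1/2<..<1}" "x < y"
  have "kappa_star y < 0" "kappa_star x < kappa_star y"
    using kappa_star_neg strict_mono_onD[OF strict_mono_on_kappa_star_high] xy by auto
  then have "(kappa_star y + 1) / kappa_star y < (kappa_star x + 1) / kappa_star x"
    by (simp add: field_simps)
  then show "alpha_star F0 F1 f0 f1 y < alpha_star F0 F1 f0 f1 x"
    using xy by (simp add: alpha_star_def kappa_star_def Let_def)
qed

end

theorem corollary1:
  fixes F0 F1 f0 f1 :: "real \<Rightarrow> real"
  assumes dens0: "\<And>s. (f0 has_integral F0 s) {..s}"
    and dens1: "\<And>s. (f1 has_integral F1 s) {..s}"
    and tot0: "(f0 has_integral 1) UNIV"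
    and tot1: "(f1 has_integral 1) UNIV"
    and supp0: "\<And>s. f0 s > 0"
    and supp1: "\<And>s. f1 s > 0"
    and eq0: "f0 0 = f1 0"
    and mlrp: "strict_mono (lik_ratio f0 f1)"
    and onto: "\<And>y. y > 0 \<Longrightarrow> \<exists>s. lik_ratio f0 f1 s = y"
  shows "(\<forall>x y. 0 < x \<and> x < y \<and> y < 1/2 \<longrightarrow>
            alpha_star F0 F1 f0 f1 x < alpha_star F0 F1 f0 f1 y)
       \<and> (\<forall>x y. 1/2 < x \<and> x < y \<and> y < 1 \<longrightarrow>
            alpha_star F0 F1 f0 f1 y < alpha_star F0 F1 f0 f1 x)"
proof -
  interpret mlr_model F0 F1 f0 f1
    by unfold_locales (fact dens0 dens1 tot0 tot1 supp0 mlrp onto)+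
  show ?thesis
    using strict_mono_onD[OF strict_mono_on_alpha_star]
      monotone_onD[OF strict_antimono_on_alpha_star] by auto
qed

end
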